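(* Let $\mathsf G=(A_\star,B,C,D)$ with $A_\star=SJ_\star S^{-1}$ its Jordan decomposition and $\rho(A_\star)\le1$. Then for all $n\ge1$, \[ \|\mathcal M_n(\mathsf G)\|_{\mathrm{op}}\le\|\mathcal M_{n+1}(\mathsf G)\|_{\mathrm{op}}\le\|D\|_{\mathrm{op}}+\|S^{-1}B\|_{\mathrm{op}}\|CS\|_{\mathrm{op}}K_2(n). \]
   Context: $\mathcal M_k(\mathsf G):=[D|CB|CA_\star B|\dots|CA_\star^{k-2}B]$. $\mathsf{blkspec}(A_\star)$ is the set of pairs $(\lambda,k)$ with $\lambda$ an eigenvalue of $A_\star$ and $k$ the size of an associated Jordan block. Define $\widetilde M(k,N):=N^{1/2}$ if $k=1$; $N^{k-1/2}\big(\frac e{k-1}\big)^{k-1}$ if $2\le k\le N+1$; $N^{1/2}2^N$ if $k\ge N+1$. Define $M(k,\lambda,N):=\min\{\frac{k}{(1-|\lambda|)^{k-1/2}},\widetilde M(k,N)\}$ if $0\le|\lambda|<1$ and $\widetilde M(k,N)$ if $|\lambda|=1$. $K_2(N):=\max_{(\lambda,k)\in\mathsf{blkspec}(A_\star)}M(k,\lambda,N)$. *)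

theory Defs
  imports "Jordan_Normal_Form.Spectral_Radius"
begin

definition vec_norm2 :: "complex vec \<Rightarrow> real" where
  "vec_norm2 x = sqrt (\<Sum>i<dim_vec x. (cmod (x $ i))\<^sup>2)"

definition op_norm :: "complex mat \<Rightarrow> real" where
  "op_norm M = Sup {vec_norm2 (M *\<^sub>v x) | x. x \<in> carrier_vec (dim_col M) \<and> vec_norm2 x \<le> 1}"

text \<open>The block matrix M_k(G) = [D | CB | CAB | ... | CA^(k-2)B];
  D is p x m, B is d x m, so the result is p x (k*m). Block b (0-based) of columns
  is D for b = 0 and C A^(b-1) B for b >= 1.\<close>

definition markov_mat :: "nat \<Rightarrow> complex mat \<Rightarrow> complex mat \<Rightarrow> complex mat \<Rightarrow> complex mat \<Rightarrow> complex mat" where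
  "markov_mat k A B C D =
     mat (dim_row D) (k * dim_col D)
       (\<lambda>(i, j). if j div dim_col D = 0 then D $$ (i, j mod dim_col D)
                 else (C * (A ^\<^sub>m (j div dim_col D - 1)) * B) $$ (i, j mod dim_col D))"

text \<open>Block spectrum of a Jordan matrix given by its list of (block size, eigenvalue)
  pairs: pairs (lambda, k); blocks of size 0 are not genuine blocks.\<close>

definition blkspec :: "(nat \<times> complex) list \<Rightarrow> (complex \<times> nat) set" where
  "blkspec n_as = {(lam, k) | lam k. (k, lam) \<in> set n_as \<and> k > 0}"

definition Mtilde :: "nat \<Rightarrow> nat \<Rightarrow> real" where
  "Mtilde k N =
     (if k = 1 then sqrt (real N)
      else if 2 \<le> k \<and> k \<le> N + 1 then
        real N powr (real k - 1/2) * (exp 1 / (real k - 1)) ^ (k - 1)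
      else sqrt (real N) * 2 ^ N)"

definition Mfun :: "nat \<Rightarrow> complex \<Rightarrow> nat \<Rightarrow> real" where
  "Mfun k lam N =
     (if cmod lam < 1 then min (real k / (1 - cmod lam) powr (real k - 1/2)) (Mtilde k N)
      else Mtilde k N)"

definition K2 :: "(nat \<times> complex) list \<Rightarrow> nat \<Rightarrow> real" where
  "K2 n_as N = Max ((\<lambda>(lam, k). Mfun k lam N) ` blkspec n_as)"

end

theory Submission
  imports Defs "HOL-Analysis.L2_Norm" "HOL-Analysis.Convex"
begin

text \<open>With \<open>A = S J S\<^sup>-\<^sup>1\<close>, the blocks \<open>C A\<^sup>t B\<close> of \<open>\<M>\<^sub>n\<^sub>+\<^sub>1\<close> act on the block
  components \<open>x\<^sub>t\<close> of a unit vector as \<open>x \<mapsto> C S \<Sum>\<^sub>t J\<^sup>t (S\<^sup>-\<^sup>1 B) x\<^sub>t\<close>, so everything reduces to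
  bounding \<open>\<parallel>\<Sum>\<^sub>t\<^sub><\<^sub>N J\<^sup>t y\<^sub>t\<parallel>\<close> by a constant times \<open>(\<Sum>\<^sub>t \<parallel>y\<^sub>t\<parallel>\<^sup>2)\<^sup>1\<^sup>/\<^sup>2\<close>. Since \<open>J\<close> is block diagonal
  it suffices to do this for one Jordan block \<open>J\<^sub>k(\<lambda>)\<close>. Its power \<open>J\<^sub>k(\<lambda>)\<^sup>t\<close> is
  \<open>\<Sum>\<^sub>j\<^sub><\<^sub>k (t choose j) \<lambda>\<^sup>t\<^sup>-\<^sup>j N\<^sup>j\<close> with contractive shifts \<open>N\<^sup>j\<close>, so by the triangle and
  Cauchy-Schwarz inequalities the constant is the \<open>\<ell>\<^sup>2\<close>-norm over \<open>t < N\<close> of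
  \<open>c\<^sub>t = \<Sum>\<^sub>j\<^sub><\<^sub>k (t choose j) |\<lambda>|\<^sup>t\<^sup>-\<^sup>j\<close>. This norm is at most \<open>\<surd>N\<close> times a uniform bound on \<open>c\<^sub>t\<close>
  (a binomial tail estimate), and for \<open>|\<lambda>| < 1\<close> also at most \<open>k (1 - |\<lambda>|)\<^sup>1\<^sup>/\<^sup>2\<^sup>-\<^sup>k\<close>, by
  \<open>(t choose j)\<^sup>2 \<le> (2t choose 2j)\<close> and the generating function of binomial coefficients.\<close>

section \<open>Sums of binomial coefficients\<close>

lemma sum_power_le_inverse:
  fixes r :: real assumes "0 \<le> r" "r < 1"
  shows "(\<Sum>u<U. r ^ u) \<le> 1 / (1 - r)"
proof -
  have "(\<Sum>u<U. r ^ u) * (1 - r) = 1 - r ^ U"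
    using assms by (simp add: sum_gp_strict)
  also have "\<dots> \<le> 1" using assms by simp
  finally show ?thesis using assms by (simp add: le_divide_eq)
qed

lemma sum_power_diff_le_inverse:
  fixes r :: real assumes "0 \<le> r" "r < 1"
  shows "(\<Sum>u\<in>{a..<b}. r ^ (u - a)) \<le> 1 / (1 - r)"
proof -
  have "(\<Sum>u\<in>{a..<b}. r ^ (u - a)) = (\<Sum>u<b - a. r ^ u)"
    by (rule sum.reindex_bij_witness[of _ "\<lambda>u. u + a" "\<lambda>u. u - a"]) auto
  then show ?thesis using sum_power_le_inverse[OF assms] by simp
qed

lemma choose_Suc_eq_sum_lessThan: "real (u choose Suc m) = (\<Sum>v<u. real (v choose m))"
  by (induction u) auto

lemma sum_lessThan_triangle_swap:
  "(\<Sum>u<U. \<Sum>v<u. f u v) = (\<Sum>v<U. \<Sum>u\<in>{Suc v..<U}. (f u v :: 'a :: comm_monoid_add))"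
proof -
  have "(\<Sum>u<U. \<Sum>v<u. f u v) = (\<Sum>u<U. \<Sum>v\<in>{v \<in> {..<U}. v < u}. f u v)"
    by (intro sum.cong) auto
  also have "\<dots> = (\<Sum>v<U. \<Sum>u\<in>{u \<in> {..<U}. v < u}. f u v)"
    by (rule sum.swap_restrict) auto
  also have "\<dots> = (\<Sum>v<U. \<Sum>u\<in>{Suc v..<U}. f u v)"
    by (intro sum.cong) auto
  finally show ?thesis .
qed

text \<open>A truncation of \<open>\<Sum>\<^sub>u (u choose m) r\<^sup>u\<^sup>-\<^sup>m = (1 - r)\<^sup>-\<^sup>m\<^sup>-\<^sup>1\<close>.\<close>

lemma sum_choose_mult_power_le:
  fixes r :: real assumes r: "0 \<le> r" "r < 1"
  shows "(\<Sum>u<U. real (u choose m) * r ^ (u - m)) \<le> 1 / (1 - r) ^ (m + 1)"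
proof (induction m arbitrary: U)
  case 0
  then show ?case using sum_power_le_inverse[OF r] by simp
next
  case (Suc m)
  have inner: "(\<Sum>u\<in>{Suc v..<U}. real (v choose m) * r ^ (u - Suc m))
      \<le> real (v choose m) * r ^ (v - m) * (1 / (1 - r))" for v
  proof (cases "v < m")
    case False
    have "(\<Sum>u\<in>{Suc v..<U}. real (v choose m) * r ^ (u - Suc m))
        = real (v choose m) * r ^ (v - m) * (\<Sum>u\<in>{Suc v..<U}. r ^ (u - Suc v))"
      unfolding sum_distrib_left
      by (intro sum.cong refl) (use False in \<open>simp flip: power_add\<close>)
    also have "\<dots> \<le> real (v choose m) * r ^ (v - m) * (1 / (1 - r))"
      by (rule mult_left_mono[OF sum_power_diff_le_inverse[OF r]]) (use r in simp)
    finally show ?thesis .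
  qed (simp add: binomial_eq_0)
  have "(\<Sum>u<U. real (u choose Suc m) * r ^ (u - Suc m))
      = (\<Sum>u<U. \<Sum>v<u. real (v choose m) * r ^ (u - Suc m))"
    by (simp add: choose_Suc_eq_sum_lessThan sum_distrib_right)
  also have "\<dots> = (\<Sum>v<U. \<Sum>u\<in>{Suc v..<U}. real (v choose m) * r ^ (u - Suc m))"
    by (rule sum_lessThan_triangle_swap)
  also have "\<dots> \<le> (\<Sum>v<U. real (v choose m) * r ^ (v - m)) * (1 / (1 - r))"
    unfolding sum_distrib_right by (intro sum_mono inner)
  also have "\<dots> \<le> 1 / (1 - r) ^ (m + 1) * (1 / (1 - r))"
    by (rule mult_right_mono[OF Suc]) (use r in simp)
  finally show ?case by (simp add: mult_ac)
qed

lemma choose_square_le_choose_double: "real (t choose j) ^ 2 \<le> real ((2 * t) choose (2 * j))"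
proof -
  have "(t choose j) * (t choose (2 * j - j)) \<le> (\<Sum>i\<le>2 * j. (t choose i) * (t choose (2 * j - i)))"
    by (rule member_le_sum) auto
  also have "\<dots> = (2 * t) choose (2 * j)"
    using vandermonde[of t t "2 * j"] by (simp add: mult_2)
  finally show ?thesis by (simp add: power2_eq_square flip: of_nat_mult)
qed

lemma sum_choose_lessThan_le_power2: "(\<Sum>j<k. t choose j) \<le> 2 ^ t"
proof -
  have "(\<Sum>j<k. t choose j) = (\<Sum>j\<in>{..<k} \<inter> {..t}. t choose j)"
    by (rule sum.mono_neutral_right) (auto simp: binomial_eq_0)
  also have "\<dots> \<le> (\<Sum>j\<le>t. t choose j)" by (rule sum_mono2) auto
  finally show ?thesis by (simp add: choose_row_sum)
qed

lemma sum_choose_atMost_le_exp: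
  assumes "1 \<le> m" "m \<le> t"
  shows "real (\<Sum>j\<le>m. t choose j) \<le> (exp 1 * real t / real m) ^ m"
proof -
  define x where "x = real m / real t"
  have x: "0 < x" "x \<le> 1" using assms unfolding x_def by auto
  have "real (\<Sum>j\<le>m. t choose j) * x ^ m = (\<Sum>j\<le>m. real (t choose j) * x ^ m)"
    by (simp add: sum_distrib_right)
  also have "\<dots> \<le> (\<Sum>j\<le>m. real (t choose j) * x ^ j)"
    by (intro sum_mono mult_left_mono power_decreasing) (use x in auto)
  also have "\<dots> \<le> (\<Sum>j\<le>t. real (t choose j) * x ^ j)"
    by (rule sum_mono2) (use assms x in simp_all)
  also have "\<dots> = (x + 1) ^ t" by (simp add: binomial_ring)
  also have "\<dots> \<le> exp x ^ t"
    by (rule power_mono) (use x in \<open>auto simp: add.commute exp_ge_add_one_self\<close>)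
  also have "\<dots> = exp 1 ^ m"
    using assms by (simp add: x_def flip: exp_of_nat_mult)
  finally have "real (\<Sum>j\<le>m. t choose j) \<le> exp 1 ^ m / x ^ m"
    using x by (simp add: pos_le_divide_eq)
  also have "\<dots> = (exp 1 * real t / real m) ^ m"
    unfolding x_def by (simp add: power_divide power_mult_distrib)
  finally show ?thesis .
qed

section \<open>The weight sequence of a Jordan block\<close>

text \<open>The entries of \<open>J\<^sub>k(\<lambda>)\<^sup>t\<close> are \<open>(t choose j) \<lambda>\<^sup>t\<^sup>-\<^sup>j\<close>, so \<open>jordan_weight k |\<lambda>| t\<close> bounds the
  sum of the moduli of any row of \<open>J\<^sub>k(\<lambda>)\<^sup>t\<close>.\<close>

definition jordan_weight :: "nat \<Rightarrow> real \<Rightarrow> nat \<Rightarrow> real" where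
  "jordan_weight k r t = (\<Sum>j<k. real (t choose j) * r ^ (t - j))"

lemma jordan_weight_nonneg: "0 \<le> r \<Longrightarrow> 0 \<le> jordan_weight k r t"
  unfolding jordan_weight_def by (intro sum_nonneg) auto

lemma jordan_weight_square_le:
  assumes "0 \<le> r"
  shows "jordan_weight k r t ^ 2 \<le> real k * (\<Sum>j<k. real ((2 * t) choose (2 * j)) * r ^ (2 * t - 2 * j))"
proof -
  have entry: "(real (t choose j) * r ^ (t - j)) ^ 2 \<le> real ((2 * t) choose (2 * j)) * r ^ (2 * t - 2 * j)"
    for j
  proof -
    have "(real (t choose j) * r ^ (t - j)) ^ 2 = real (t choose j) ^ 2 * r ^ (2 * t - 2 * j)"
      by (simp add: power_mult_distrib diff_mult_distrib mult.commute flip: power_mult)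
    also have "\<dots> \<le> real ((2 * t) choose (2 * j)) * r ^ (2 * t - 2 * j)"
      using assms by (intro mult_right_mono choose_square_le_choose_double) auto
    finally show ?thesis .
  qed
  have "jordan_weight k r t ^ 2 \<le> real k * (\<Sum>j<k. (real (t choose j) * r ^ (t - j)) ^ 2)"
    unfolding jordan_weight_def using sum_squared_le_sum_of_squares[of _ "{..<k}"]
    by (simp add: mult.commute)
  also have "\<dots> \<le> real k * (\<Sum>j<k. real ((2 * t) choose (2 * j)) * r ^ (2 * t - 2 * j))"
    by (intro mult_left_mono sum_mono entry) auto
  finally show ?thesis .
qed

lemma sum_jordan_weight_square_le:
  fixes r :: real assumes r: "0 \<le> r" "r < 1"
  shows "(\<Sum>t<N. jordan_weight k r t ^ 2) \<le> real k ^ 2 / (1 - r) ^ (2 * k - 1)"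
proof -
  have column: "(\<Sum>t<N. real ((2 * t) choose (2 * j)) * r ^ (2 * t - 2 * j)) \<le> 1 / (1 - r) ^ (2 * k - 1)"
    if j: "j < k" for j
  proof -
    have "(\<Sum>t<N. real ((2 * t) choose (2 * j)) * r ^ (2 * t - 2 * j))
        = (\<Sum>u\<in>(*) 2 ` {..<N}. real (u choose (2 * j)) * r ^ (u - 2 * j))"
      by (subst sum.reindex) (auto simp: inj_on_def)
    also have "\<dots> \<le> (\<Sum>u<2 * N. real (u choose (2 * j)) * r ^ (u - 2 * j))"
      by (rule sum_mono2) (use r in auto)
    also have "\<dots> \<le> (1 / (1 - r)) ^ (2 * j + 1)"
      using sum_choose_mult_power_le[OF r] by (simp add: power_one_over)
    also have "\<dots> \<le> (1 / (1 - r)) ^ (2 * k - 1)"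
      by (rule power_increasing) (use j r in auto)
    finally show ?thesis by (simp add: power_one_over)
  qed
  have "(\<Sum>t<N. jordan_weight k r t ^ 2)
      \<le> real k * (\<Sum>j<k. \<Sum>t<N. real ((2 * t) choose (2 * j)) * r ^ (2 * t - 2 * j))"
    using sum_mono[of "{..<N}", OF jordan_weight_square_le[OF r(1)]]
    by (simp add: sum_distrib_left sum.swap[of _ "{..<N}"])
  also have "\<dots> \<le> real k * (\<Sum>j<k. 1 / (1 - r) ^ (2 * k - 1))"
    by (intro mult_left_mono sum_mono column) auto
  finally show ?thesis by (simp add: power2_eq_square)
qed

lemma L2_jordan_weight_le_geometric:
  fixes r :: real assumes r: "0 \<le> r" "r < 1" and k: "k \<ge> 1"
  shows "L2_set (jordan_weight k r) {..<N} \<le> real k / (1 - r) powr (real k - 1 / 2)"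
proof -
  have "((1 - r) powr (real k - 1 / 2)) ^ 2 = (1 - r) powr ((real k - 1 / 2) + (real k - 1 / 2))"
    unfolding power2_eq_square by (rule powr_add[symmetric])
  also have "(real k - 1 / 2) + (real k - 1 / 2) = real (2 * k - 1)"
    using k by (simp add: of_nat_diff)
  also have "(1 - r) powr real (2 * k - 1) = (1 - r) ^ (2 * k - 1)"
    using r by (simp add: powr_realpow)
  finally have square: "(real k / (1 - r) powr (real k - 1 / 2)) ^ 2 = real k ^ 2 / (1 - r) ^ (2 * k - 1)"
    by (simp add: power_divide)
  have "L2_set (jordan_weight k r) {..<N} \<le> sqrt ((real k / (1 - r) powr (real k - 1 / 2)) ^ 2)"
    unfolding L2_set_def square by (rule real_sqrt_le_mono[OF sum_jordan_weight_square_le[OF r]])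
  also have "\<dots> = real k / (1 - r) powr (real k - 1 / 2)" by simp
  finally show ?thesis .
qed

lemma L2_set_lessThan_le_uniform:
  assumes "\<And>t. t < N \<Longrightarrow> 0 \<le> f t \<and> f t \<le> Q"
  shows "L2_set f {..<N} \<le> sqrt (real N) * Q"
proof (cases "N = 0")
  case False
  then have "0 \<le> Q" using assms[of 0] by auto
  have "L2_set f {..<N} \<le> L2_set (\<lambda>_. Q) {..<N}"
    by (rule L2_set_mono) (use assms in auto)
  then show ?thesis using \<open>0 \<le> Q\<close> by (simp add: L2_set_constant)
qed simp

lemma jordan_weight_le_sum_choose:
  assumes "0 \<le> r" "r \<le> 1"
  shows "jordan_weight k r t \<le> real (\<Sum>j<k. t choose j)"
  unfolding jordan_weight_def of_nat_sum
  by (intro sum_mono mult_left_le power_le_one) (use assms in auto)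

lemma jordan_weight_le_power2:
  assumes "0 \<le> r" "r \<le> 1"
  shows "jordan_weight k r t \<le> 2 ^ t"
proof -
  have "real (\<Sum>j<k. t choose j) \<le> real (2 ^ t)"
    by (rule of_nat_mono[OF sum_choose_lessThan_le_power2])
  then show ?thesis using jordan_weight_le_sum_choose[OF assms, of k t] by simp
qed

lemma jordan_weight_Suc_le_exp:
  assumes r: "0 \<le> r" "r \<le> 1" and m: "1 \<le> m" "m \<le> N" and t: "t < N"
  shows "jordan_weight (Suc m) r t \<le> (exp 1 * real N / real m) ^ m"
proof (cases "t < m")
  case True
  have "jordan_weight (Suc m) r t \<le> 2 ^ t" by (rule jordan_weight_le_power2[OF r])
  also have "(2::real) ^ t \<le> 2 ^ m" using True by (intro power_increasing) auto
  also have "(2::real) ^ m \<le> exp 1 ^ m"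
    using exp_ge_add_one_self[of 1] by (intro power_mono) auto
  also have "\<dots> \<le> (exp 1 * real N / real m) ^ m"
    using m by (intro power_mono) (auto simp: field_simps)
  finally show ?thesis .
next
  case False
  have "jordan_weight (Suc m) r t \<le> real (\<Sum>j\<le>m. t choose j)"
    using jordan_weight_le_sum_choose[OF r, of "Suc m" t] by (simp only: lessThan_Suc_atMost)
  also have "\<dots> \<le> (exp 1 * real t / real m) ^ m"
    by (rule sum_choose_atMost_le_exp) (use m False in auto)
  also have "\<dots> \<le> (exp 1 * real N / real m) ^ m"
    using t m by (intro power_mono divide_right_mono) auto
  finally show ?thesis .
qed

lemma L2_jordan_weight_le_Mtilde:
  assumes r: "0 \<le> r" "r \<le> 1" and k: "k \<ge> 1" and N: "N \<ge> 1"
  shows "L2_set (jordan_weight k r) {..<N} \<le> Mtilde k N"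
proof -
  consider "k = 1" | "2 \<le> k" "k \<le> N + 1" | "N + 1 < k" using k by linarith
  then show ?thesis
  proof cases
    case 1
    have "L2_set (jordan_weight k r) {..<N} \<le> sqrt (real N) * 1"
      by (rule L2_set_lessThan_le_uniform) (use 1 r in \<open>auto simp: jordan_weight_def power_le_one\<close>)
    then show ?thesis using 1 by (simp add: Mtilde_def)
  next
    case 2
    define m where "m = k - 1"
    have m: "1 \<le> m" "m \<le> N" "k = Suc m" using 2 unfolding m_def by auto
    have "L2_set (jordan_weight k r) {..<N} \<le> sqrt (real N) * (exp 1 * real N / real m) ^ m"
      using jordan_weight_Suc_le_exp[OF r m(1,2)] jordan_weight_nonneg[OF r(1)] m(3)
      by (intro L2_set_lessThan_le_uniform) auto
    also have "\<dots> = real N powr (real m + 1 / 2) * (exp 1 / real m) ^ m"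
    proof -
      have "real N powr (real m + 1 / 2) = real N ^ m * sqrt (real N)"
        using N by (simp add: powr_add powr_realpow powr_half_sqrt)
      then show ?thesis by (simp add: power_mult_distrib power_divide)
    qed
    finally show ?thesis using 2 m by (simp add: Mtilde_def add.commute)
  next
    case 3
    have "jordan_weight k r t \<le> 2 ^ N" if "t < N" for t
    proof -
      have "(2::real) ^ t \<le> 2 ^ N" using that by (intro power_increasing) auto
      then show ?thesis using jordan_weight_le_power2[OF r, of k t] by linarith
    qed
    then have "L2_set (jordan_weight k r) {..<N} \<le> sqrt (real N) * 2 ^ N"
      using jordan_weight_nonneg[OF r(1)] by (intro L2_set_lessThan_le_uniform) auto
    then show ?thesis using 3 unfolding Mtilde_def by simp
  qed
qed

lemma L2_jordan_weight_le_Mfun: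
  assumes "k \<ge> 1" "N \<ge> 1" "cmod lam \<le> 1"
  shows "L2_set (jordan_weight k (cmod lam)) {..<N} \<le> Mfun k lam N"
proof (cases "cmod lam < 1")
  case True
  then show ?thesis
    using L2_jordan_weight_le_geometric[OF norm_ge_zero True assms(1)]
      L2_jordan_weight_le_Mtilde[OF norm_ge_zero assms(3,1,2)]
    unfolding Mfun_def by simp
next
  case False
  then show ?thesis
    using L2_jordan_weight_le_Mtilde[OF norm_ge_zero assms(3,1,2)] unfolding Mfun_def by simp
qed

section \<open>Sums of matrix powers\<close>

lemma sum_lessThan_add:
  fixes k r :: nat
  shows "(\<Sum>j<k + r. f j) = (\<Sum>j<k. f j) + (\<Sum>j<r. f (k + j))"
  by (induction r) (auto simp: add.assoc)

lemma sum_lessThan_mult_blocks: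
  fixes k m :: nat
  shows "(\<Sum>c<k * m. f c) = (\<Sum>b<k. \<Sum>l<m. f (b * m + l))"
proof (induction k)
  case (Suc k)
  have "Suc k * m = k * m + m" by simp
  then show ?case using Suc by (simp only: sum_lessThan_add sum.lessThan_Suc)
qed simp

definition pow_sum_bounded :: "complex mat \<Rightarrow> nat \<Rightarrow> real \<Rightarrow> nat \<Rightarrow> bool" where
  "pow_sum_bounded M n K N \<longleftrightarrow>
     (\<forall>Y. L2_set (\<lambda>i. cmod (\<Sum>t<N. \<Sum>j<n. (M ^\<^sub>m t) $$ (i, j) * Y t j)) {..<n}
        \<le> K * L2_set (\<lambda>t. L2_set (\<lambda>j. cmod (Y t j)) {..<n}) {..<N})"

lemma pow_sum_bounded_mono: "pow_sum_bounded M n K N \<Longrightarrow> K \<le> K' \<Longrightarrow> pow_sum_bounded M n K' N"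
  unfolding pow_sum_bounded_def by (meson L2_set_nonneg mult_right_mono order_trans)

lemma L2_set_norm_sum_le:
  "finite F \<Longrightarrow> L2_set (\<lambda>i. cmod (\<Sum>a\<in>F. f a i)) I \<le> (\<Sum>a\<in>F. L2_set (\<lambda>i. cmod (f a i)) I)"
proof (induction F rule: finite_induct)
  case (insert a F)
  have "L2_set (\<lambda>i. cmod (\<Sum>b\<in>insert a F. f b i)) I
      \<le> L2_set (\<lambda>i. cmod (f a i) + cmod (\<Sum>b\<in>F. f b i)) I"
    using insert by (intro L2_set_mono) (auto simp: norm_triangle_ineq)
  also have "\<dots> \<le> L2_set (\<lambda>i. cmod (f a i)) I + L2_set (\<lambda>i. cmod (\<Sum>b\<in>F. f b i)) I"
    by (rule L2_set_triangle_ineq)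
  finally show ?case using insert by simp
qed (simp add: L2_set_0')

lemma sum_lessThan_if_le:
  fixes k i :: nat shows "(\<Sum>j<k. if i \<le> j then h (j - i) else 0) = (\<Sum>s<k - i. h s)"
  by (induction k) (auto simp: Suc_diff_le)

lemma sum_lessThan_if_add_less:
  fixes k i :: nat shows "(\<Sum>s<k. if i + s < k then h s else 0) = (\<Sum>s<k - i. h s)"
proof -
  have "(\<Sum>s<k. if i + s < k then h s else 0) = (\<Sum>s\<in>{s \<in> {..<k}. i + s < k}. h s)"
    by (rule sum.inter_filter[symmetric]) simp
  also have "{s \<in> {..<k}. i + s < k} = {..<k - i}" by auto
  finally show ?thesis .
qed

lemma L2_set_shift_le:
  fixes k s :: nat
  shows "L2_set (\<lambda>i. cmod (if i + s < k then y (i + s) else 0)) {..<k} \<le> L2_set (\<lambda>j. cmod (y j)) {..<k}"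
proof -
  have "(\<Sum>i<k. cmod (if i + s < k then y (i + s) else 0) ^ 2)
      = (\<Sum>i<k. if s + i < k then cmod (y (s + i)) ^ 2 else 0)"
    by (intro sum.cong) (auto simp: add.commute)
  also have "\<dots> = (\<Sum>j\<in>(+) s ` {..<k - s}. cmod (y j) ^ 2)"
    by (subst sum.reindex) (auto simp: sum_lessThan_if_add_less)
  also have "\<dots> \<le> (\<Sum>j<k. cmod (y j) ^ 2)" by (rule sum_mono2) auto
  finally show ?thesis unfolding L2_set_def by (rule real_sqrt_le_mono)
qed

text \<open>Write \<open>J\<^sub>k(\<lambda>)\<^sup>t = \<Sum>\<^sub>s\<^sub><\<^sub>k (t choose s) \<lambda>\<^sup>t\<^sup>-\<^sup>s N\<^sup>s\<close>, where the nilpotent shift \<open>N\<^sup>s\<close> does not increase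
  norms; then apply the triangle inequality and Cauchy-Schwarz over \<open>t\<close>.\<close>

lemma jordan_block_pow_sum_bounded:
  "pow_sum_bounded (jordan_block k lam) k (L2_set (jordan_weight k (cmod lam)) {..<N}) N"
  unfolding pow_sum_bounded_def
proof
  fix Y :: "nat \<Rightarrow> nat \<Rightarrow> complex"
  define a where "a t s = of_nat (t choose s) * lam ^ (t - s)" for t s
  define Z where "Z t s i = (if i + s < k then Y t (i + s) else 0)" for t s i
  define LY where "LY t = L2_set (\<lambda>j. cmod (Y t j)) {..<k}" for t
  have row: "(\<Sum>j<k. (jordan_block k lam ^\<^sub>m t) $$ (i, j) * Y t j) = (\<Sum>s<k. a t s * Z t s i)"
    if i: "i < k" for i t
  proof -
    have "(\<Sum>j<k. (jordan_block k lam ^\<^sub>m t) $$ (i, j) * Y t j)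
        = (\<Sum>j<k. if i \<le> j then a t (j - i) * Y t (i + (j - i)) else 0)"
      by (rule sum.cong) (use i in \<open>auto simp: jordan_block_pow a_def\<close>)
    also have "\<dots> = (\<Sum>s<k - i. a t s * Y t (i + s))"
      by (rule sum_lessThan_if_le)
    also have "\<dots> = (\<Sum>s<k. if i + s < k then a t s * Y t (i + s) else 0)"
      by (rule sum_lessThan_if_add_less[symmetric])
    also have "\<dots> = (\<Sum>s<k. a t s * Z t s i)" by (rule sum.cong) (auto simp: Z_def)
    finally show ?thesis .
  qed
  have shift: "L2_set (\<lambda>i. cmod (a t s * Z t s i)) {..<k} \<le> cmod (a t s) * LY t" for t s
  proof -
    have "L2_set (\<lambda>i. cmod (a t s * Z t s i)) {..<k} = cmod (a t s) * L2_set (\<lambda>i. cmod (Z t s i)) {..<k}"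
      by (simp add: L2_set_right_distrib norm_mult)
    also have "\<dots> \<le> cmod (a t s) * LY t"
      unfolding LY_def Z_def by (rule mult_left_mono[OF L2_set_shift_le]) simp
    finally show ?thesis .
  qed
  have "L2_set (\<lambda>i. cmod (\<Sum>t<N. \<Sum>j<k. (jordan_block k lam ^\<^sub>m t) $$ (i, j) * Y t j)) {..<k}
      = L2_set (\<lambda>i. cmod (\<Sum>t<N. \<Sum>s<k. a t s * Z t s i)) {..<k}"
    by (rule L2_set_cong) (auto simp: row)
  also have "\<dots> \<le> (\<Sum>t<N. L2_set (\<lambda>i. cmod (\<Sum>s<k. a t s * Z t s i)) {..<k})"
    by (rule L2_set_norm_sum_le) simp
  also have "\<dots> \<le> (\<Sum>t<N. \<Sum>s<k. L2_set (\<lambda>i. cmod (a t s * Z t s i)) {..<k})"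
    by (intro sum_mono L2_set_norm_sum_le) simp
  also have "\<dots> \<le> (\<Sum>t<N. \<Sum>s<k. cmod (a t s) * LY t)"
    by (intro sum_mono shift)
  also have "\<dots> = (\<Sum>t<N. jordan_weight k (cmod lam) t * LY t)"
    by (simp add: jordan_weight_def a_def sum_distrib_right norm_mult norm_power)
  also have "\<dots> = (\<Sum>t<N. \<bar>jordan_weight k (cmod lam) t\<bar> * \<bar>LY t\<bar>)"
    by (simp add: jordan_weight_nonneg LY_def L2_set_nonneg)
  also have "\<dots> \<le> L2_set (jordan_weight k (cmod lam)) {..<N} * L2_set LY {..<N}"
    by (rule L2_set_mult_ineq)
  finally show "L2_set (\<lambda>i. cmod (\<Sum>t<N. \<Sum>j<k. (jordan_block k lam ^\<^sub>m t) $$ (i, j) * Y t j)) {..<k}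
      \<le> L2_set (jordan_weight k (cmod lam)) {..<N} * L2_set (\<lambda>t. L2_set (\<lambda>j. cmod (Y t j)) {..<k}) {..<N}"
    unfolding LY_def .
qed

lemma L2_set_lessThan_add_square:
  fixes k r :: nat
  shows "L2_set f {..<k + r} ^ 2 = L2_set f {..<k} ^ 2 + L2_set (\<lambda>j. f (k + j)) {..<r} ^ 2"
  by (simp add: L2_set_def sum_nonneg sum_lessThan_add)

lemma pow_sum_bounded_four_block_diag:
  assumes A: "A \<in> carrier_mat k k" and B: "B \<in> carrier_mat r r" and K: "0 \<le> K"
    and bounded: "pow_sum_bounded A k K N" "pow_sum_bounded B r K N"
  shows "pow_sum_bounded (four_block_mat A (0\<^sub>m k r) (0\<^sub>m r k) B) (k + r) K N"
  unfolding pow_sum_bounded_def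
proof
  fix Y :: "nat \<Rightarrow> nat \<Rightarrow> complex"
  let ?M = "four_block_mat A (0\<^sub>m k r) (0\<^sub>m r k) B"
  define W where "W i = cmod (\<Sum>t<N. \<Sum>j<k + r. (?M ^\<^sub>m t) $$ (i, j) * Y t j)" for i
  define LY where "LY t = L2_set (\<lambda>j. cmod (Y t j)) {..<k + r}" for t
  define LA where "LA t = L2_set (\<lambda>j. cmod (Y t j)) {..<k}" for t
  define LB where "LB t = L2_set (\<lambda>j. cmod (Y t (k + j))) {..<r}" for t
  have LY: "L2_set LY {..<N} ^ 2 = L2_set LA {..<N} ^ 2 + L2_set LB {..<N} ^ 2"
  proof -
    have "L2_set LY {..<N} ^ 2 = (\<Sum>t<N. LY t ^ 2)" by (simp add: L2_set_def sum_nonneg)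
    also have "\<dots> = (\<Sum>t<N. LA t ^ 2 + LB t ^ 2)"
      by (simp add: LY_def LA_def LB_def L2_set_lessThan_add_square)
    finally show ?thesis by (simp add: L2_set_def sum_nonneg sum.distrib)
  qed
  have pow: "?M ^\<^sub>m t = four_block_mat (A ^\<^sub>m t) (0\<^sub>m k r) (0\<^sub>m r k) (B ^\<^sub>m t)" for t
    by (rule pow_four_block_mat[OF A B])
  have top: "W i = cmod (\<Sum>t<N. \<Sum>j<k. (A ^\<^sub>m t) $$ (i, j) * Y t j)" if "i < k" for i
    unfolding W_def pow sum_lessThan_add using that A B
    by (auto intro!: sum.cong arg_cong[where f = cmod])
  have bot: "W (k + i) = cmod (\<Sum>t<N. \<Sum>j<r. (B ^\<^sub>m t) $$ (i, j) * Y t (k + j))" if "i < r" for i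
    unfolding W_def pow sum_lessThan_add using that A B
    by (auto intro!: sum.cong arg_cong[where f = cmod])
  have "L2_set W {..<k} \<le> K * L2_set LA {..<N}"
    using bounded(1) top unfolding pow_sum_bounded_def LA_def
    by (metis (no_types, lifting) L2_set_cong lessThan_iff)
  moreover have "L2_set (\<lambda>i. W (k + i)) {..<r} \<le> K * L2_set LB {..<N}"
    using spec[OF bounded(2)[unfolded pow_sum_bounded_def], of "\<lambda>t j. Y t (k + j)"] bot
    unfolding LB_def by (metis (no_types, lifting) L2_set_cong lessThan_iff)
  ultimately have "L2_set W {..<k + r} ^ 2 \<le> (K * L2_set LA {..<N}) ^ 2 + (K * L2_set LB {..<N}) ^ 2"
    unfolding L2_set_lessThan_add_square by (intro add_mono power_mono) (auto intro: L2_set_nonneg)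
  also have "\<dots> = (K * L2_set LY {..<N}) ^ 2"
    by (simp add: power_mult_distrib LY distrib_left)
  finally show "L2_set W {..<k + r} \<le> K * L2_set LY {..<N}"
    by (rule power2_le_imp_le) (use K in \<open>simp add: L2_set_nonneg\<close>)
qed

lemma jordan_matrix_pow_sum_bounded:
  assumes "0 \<le> K" and "\<forall>(k, lam)\<in>set n_as. pow_sum_bounded (jordan_block k lam) k K N"
  shows "pow_sum_bounded (jordan_matrix n_as) (sum_list (map fst n_as)) K N"
  using assms(2)
proof (induction n_as)
  case Nil
  then show ?case using assms(1) unfolding pow_sum_bounded_def by simp
next
  case (Cons kl n_as)
  obtain k lam where kl: "kl = (k, lam)" by force
  have "pow_sum_bounded (four_block_mat (jordan_block k lam) (0\<^sub>m k (sum_list (map fst n_as)))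
      (0\<^sub>m (sum_list (map fst n_as)) k) (jordan_matrix n_as)) (k + sum_list (map fst n_as)) K N"
    using Cons kl by (intro pow_sum_bounded_four_block_diag assms(1)) auto
  then show ?case unfolding kl jordan_matrix_Cons by simp
qed

section \<open>Euclidean and operator norms\<close>

lemma vec_norm2_eq_L2_set: "vec_norm2 x = L2_set (\<lambda>i. cmod (x $ i)) {..<dim_vec x}"
  unfolding vec_norm2_def L2_set_def by simp

lemma vec_norm2_nonneg: "0 \<le> vec_norm2 x"
  unfolding vec_norm2_def by (simp add: sum_nonneg)

lemma vec_norm2_smult: "vec_norm2 (a \<cdot>\<^sub>v v) = cmod a * vec_norm2 v"
  unfolding vec_norm2_eq_L2_set L2_set_right_distrib[OF norm_ge_zero]
  by (intro L2_set_cong) (auto simp: norm_mult)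

lemma vec_norm2_add_le:
  assumes "dim_vec u = dim_vec v"
  shows "vec_norm2 (u + v) \<le> vec_norm2 u + vec_norm2 v"
proof -
  have "vec_norm2 (u + v) = L2_set (\<lambda>i. cmod (u $ i + v $ i)) {..<dim_vec v}"
    unfolding vec_norm2_eq_L2_set using assms by (intro L2_set_cong) auto
  also have "\<dots> \<le> L2_set (\<lambda>i. cmod (u $ i) + cmod (v $ i)) {..<dim_vec v}"
    by (intro L2_set_mono) (auto simp: norm_triangle_ineq)
  also have "\<dots> \<le> vec_norm2 u + vec_norm2 v"
    unfolding vec_norm2_eq_L2_set using assms by (simp add: L2_set_triangle_ineq)
  finally show ?thesis .
qed

lemma index_mult_mat_vec_sum:
  "i < dim_row M \<Longrightarrow> dim_vec v = dim_col M \<Longrightarrow> (M *\<^sub>v v) $ i = (\<Sum>j<dim_col M. M $$ (i, j) * v $ j)"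
  by (simp add: scalar_prod_def atLeast0LessThan)

lemma op_norm_bdd_above:
  "bdd_above {vec_norm2 (M *\<^sub>v x) | x. x \<in> carrier_vec (dim_col M) \<and> vec_norm2 x \<le> 1}"
proof (rule bdd_aboveI)
  fix y assume "y \<in> {vec_norm2 (M *\<^sub>v x) | x. x \<in> carrier_vec (dim_col M) \<and> vec_norm2 x \<le> 1}"
  then obtain x where x: "x \<in> carrier_vec (dim_col M)" "vec_norm2 x \<le> 1"
    and y: "y = vec_norm2 (M *\<^sub>v x)" by blast
  have entry: "cmod (x $ j) \<le> 1" if "j < dim_col M" for j
    using member_le_L2_set[of "{..<dim_vec x}" j "\<lambda>i. cmod (x $ i)"] x that
    by (simp add: vec_norm2_eq_L2_set)
  have row: "cmod ((M *\<^sub>v x) $ i) \<le> (\<Sum>j<dim_col M. cmod (M $$ (i, j)))" if "i < dim_row M" for i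
  proof -
    have "cmod ((M *\<^sub>v x) $ i) = cmod (\<Sum>j<dim_col M. M $$ (i, j) * x $ j)"
      using that x index_mult_mat_vec_sum[of i M x] by auto
    also have "\<dots> \<le> (\<Sum>j<dim_col M. cmod (M $$ (i, j) * x $ j))"
      by (rule norm_sum)
    also have "\<dots> \<le> (\<Sum>j<dim_col M. cmod (M $$ (i, j)))"
      by (intro sum_mono) (auto simp: norm_mult intro: mult_left_le entry)
    finally show ?thesis .
  qed
  have "y \<le> (\<Sum>i<dim_row M. cmod ((M *\<^sub>v x) $ i))"
    unfolding y vec_norm2_eq_L2_set dim_mult_mat_vec by (rule L2_set_le_sum) simp
  also have "\<dots> \<le> (\<Sum>i<dim_row M. \<Sum>j<dim_col M. cmod (M $$ (i, j)))"
    by (intro sum_mono row) simp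
  finally show "y \<le> (\<Sum>i<dim_row M. \<Sum>j<dim_col M. cmod (M $$ (i, j)))" .
qed

lemma vec_norm2_mult_mat_vec_le_op_norm:
  "x \<in> carrier_vec (dim_col M) \<Longrightarrow> vec_norm2 x \<le> 1 \<Longrightarrow> vec_norm2 (M *\<^sub>v x) \<le> op_norm M"
  unfolding op_norm_def by (rule cSup_upper[OF _ op_norm_bdd_above]) blast

lemma op_norm_nonneg: "0 \<le> op_norm M"
proof -
  have "vec_norm2 (M *\<^sub>v 0\<^sub>v (dim_col M)) \<le> op_norm M"
    by (rule vec_norm2_mult_mat_vec_le_op_norm) (auto simp: vec_norm2_def)
  then show ?thesis using vec_norm2_nonneg order_trans by blast
qed

lemma op_norm_least:
  assumes "\<And>x. x \<in> carrier_vec (dim_col M) \<Longrightarrow> vec_norm2 x \<le> 1 \<Longrightarrow> vec_norm2 (M *\<^sub>v x) \<le> K"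
  shows "op_norm M \<le> K"
  unfolding op_norm_def
proof (rule cSup_least)
  have "0\<^sub>v (dim_col M) \<in> carrier_vec (dim_col M) \<and> vec_norm2 (0\<^sub>v (dim_col M) :: complex vec) \<le> 1"
    by (simp add: vec_norm2_def)
  then show "{vec_norm2 (M *\<^sub>v x) | x. x \<in> carrier_vec (dim_col M) \<and> vec_norm2 x \<le> 1} \<noteq> {}"
    by blast
qed (use assms in auto)

lemma vec_norm2_mult_mat_vec_le:
  assumes x: "x \<in> carrier_vec (dim_col M)"
  shows "vec_norm2 (M *\<^sub>v x) \<le> op_norm M * vec_norm2 x"
proof (cases "vec_norm2 x = 0")
  case True
  then have "x = 0\<^sub>v (dim_col M)"
    using x by (intro eq_vecI) (auto simp: vec_norm2_eq_L2_set L2_set_eq_0_iff)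
  then have "M *\<^sub>v x = 0\<^sub>v (dim_row M)" by (intro eq_vecI) (auto simp: scalar_prod_def)
  then show ?thesis using True by (simp add: vec_norm2_def)
next
  case False
  define c where "c = vec_norm2 x"
  have c: "0 < c" using False vec_norm2_nonneg[of x] unfolding c_def by simp
  define x' where "x' = complex_of_real (1 / c) \<cdot>\<^sub>v x"
  have "vec_norm2 x' = 1"
    using c unfolding x'_def vec_norm2_smult c_def[symmetric] by (simp add: norm_divide)
  then have "vec_norm2 (M *\<^sub>v x') \<le> op_norm M"
    by (intro vec_norm2_mult_mat_vec_le_op_norm) (use x in \<open>auto simp: x'_def\<close>)
  moreover have "M *\<^sub>v x' = complex_of_real (1 / c) \<cdot>\<^sub>v (M *\<^sub>v x)"
    unfolding x'_def by (rule mult_mat_vec[OF carrier_matI x]) auto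
  ultimately have "(1 / c) * vec_norm2 (M *\<^sub>v x) \<le> op_norm M"
    using c by (simp add: vec_norm2_smult norm_divide)
  then show ?thesis using c unfolding c_def[symmetric] by (simp add: field_simps)
qed

lemma vec_norm2_pow_sum_le:
  assumes bounded: "pow_sum_bounded M d K N" and M: "M \<in> carrier_mat d d"
    and y: "\<And>t. y t \<in> carrier_vec d"
  shows "vec_norm2 (vec d (\<lambda>i. \<Sum>t<N. (M ^\<^sub>m t *\<^sub>v y t) $ i)) \<le> K * L2_set (\<lambda>t. vec_norm2 (y t)) {..<N}"
proof -
  have "vec_norm2 (vec d (\<lambda>i. \<Sum>t<N. (M ^\<^sub>m t *\<^sub>v y t) $ i))
      = L2_set (\<lambda>i. cmod (\<Sum>t<N. \<Sum>j<d. (M ^\<^sub>m t) $$ (i, j) * y t $ j)) {..<d}"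
  proof -
    have "(M ^\<^sub>m t *\<^sub>v y t) $ i = (\<Sum>j<d. (M ^\<^sub>m t) $$ (i, j) * y t $ j)" if "i < d" for i t
      by (subst index_mult_mat_vec_sum) (use M y that in auto)
    then show ?thesis unfolding vec_norm2_eq_L2_set by (intro L2_set_cong) auto
  qed
  also have "\<dots> \<le> K * L2_set (\<lambda>t. L2_set (\<lambda>j. cmod (y t $ j)) {..<d}) {..<N}"
    using bounded unfolding pow_sum_bounded_def by (rule allE[where x = "\<lambda>t j. y t $ j"])
  also have "L2_set (\<lambda>t. L2_set (\<lambda>j. cmod (y t $ j)) {..<d}) {..<N} = L2_set (\<lambda>t. vec_norm2 (y t)) {..<N}"
    by (intro L2_set_cong) (auto simp: vec_norm2_eq_L2_set carrier_vecD[OF y])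
  finally show ?thesis .
qed

section \<open>Markov parameter matrices\<close>

lemma markov_mat_dim [simp]:
  "dim_row (markov_mat k A B C D) = dim_row D" "dim_col (markov_mat k A B C D) = k * dim_col D"
  unfolding markov_mat_def by auto

lemma index_markov_mat:
  "i < dim_row D \<Longrightarrow> c < k * dim_col D \<Longrightarrow> markov_mat k A B C D $$ (i, c) =
    (if c div dim_col D = 0 then D $$ (i, c mod dim_col D)
     else (C * A ^\<^sub>m (c div dim_col D - 1) * B) $$ (i, c mod dim_col D))"
  unfolding markov_mat_def by simp

text \<open>\<open>\<M>\<^sub>n\<close> is \<open>\<M>\<^sub>n\<^sub>+\<^sub>1\<close> with its last block column removed: pad test vectors with zeros.\<close>

lemma op_norm_markov_mat_mono: "op_norm (markov_mat n A B C D) \<le> op_norm (markov_mat (n + 1) A B C D)"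
proof (rule op_norm_least)
  fix x :: "complex vec"
  assume x: "x \<in> carrier_vec (dim_col (markov_mat n A B C D))" and x1: "vec_norm2 x \<le> 1"
  define m where "m = dim_col D"
  have dx: "dim_vec x = n * m" using x unfolding m_def by simp
  have nm: "(n + 1) * m = n * m + m" by simp
  define x' where "x' = vec ((n + 1) * m) (\<lambda>c. if c < n * m then x $ c else 0)"
  have x': "x' \<in> carrier_vec (dim_col (markov_mat (n + 1) A B C D))" unfolding x'_def m_def by simp
  have "vec_norm2 x' = vec_norm2 x"
    unfolding vec_norm2_def x'_def dim_vec nm sum_lessThan_add dx by simp
  then have x'1: "vec_norm2 x' \<le> 1" using x1 by simp
  have "markov_mat (n + 1) A B C D *\<^sub>v x' = markov_mat n A B C D *\<^sub>v x"
  proof (rule eq_vecI)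
    fix i assume "i < dim_vec (markov_mat n A B C D *\<^sub>v x)"
    then have i: "i < dim_row D" by simp
    have "(markov_mat (n + 1) A B C D *\<^sub>v x') $ i
        = (\<Sum>c<(n + 1) * m. markov_mat (n + 1) A B C D $$ (i, c) * x' $ c)"
      by (subst index_mult_mat_vec_sum) (use i in \<open>auto simp: x'_def m_def\<close>)
    also have "\<dots> = (\<Sum>c<n * m. markov_mat (n + 1) A B C D $$ (i, c) * x $ c)"
      unfolding nm sum_lessThan_add by (simp add: x'_def)
    also have "\<dots> = (\<Sum>c<n * m. markov_mat n A B C D $$ (i, c) * x $ c)"
    proof (rule sum.cong)
      fix c assume "c \<in> {..<n * m}"
      then have "c < n * m" "c < (n + 1) * m" by auto
      then show "markov_mat (n + 1) A B C D $$ (i, c) * x $ c = markov_mat n A B C D $$ (i, c) * x $ c"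
        using i by (simp add: index_markov_mat m_def)
    qed simp
    also have "\<dots> = (markov_mat n A B C D *\<^sub>v x) $ i"
      by (subst index_mult_mat_vec_sum) (use i dx in \<open>auto simp: m_def\<close>)
    finally show "(markov_mat (n + 1) A B C D *\<^sub>v x') $ i = (markov_mat n A B C D *\<^sub>v x) $ i" .
  qed simp
  moreover have "vec_norm2 (markov_mat (n + 1) A B C D *\<^sub>v x') \<le> op_norm (markov_mat (n + 1) A B C D)"
    by (rule vec_norm2_mult_mat_vec_le_op_norm[OF x' x'1])
  ultimately show "vec_norm2 (markov_mat n A B C D *\<^sub>v x) \<le> op_norm (markov_mat (n + 1) A B C D)"
    by simp
qed

definition vec_block :: "nat \<Rightarrow> 'a vec \<Rightarrow> nat \<Rightarrow> 'a vec" where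
  "vec_block m x b = vec m (\<lambda>l. x $ (b * m + l))"

lemma vec_norm2_square_blocks:
  assumes "dim_vec x = k * m"
  shows "vec_norm2 x ^ 2 = (\<Sum>b<k. vec_norm2 (vec_block m x b) ^ 2)"
proof -
  have "vec_norm2 x ^ 2 = (\<Sum>c<k * m. cmod (x $ c) ^ 2)"
    unfolding vec_norm2_def assms by (simp add: sum_nonneg)
  also have "\<dots> = (\<Sum>b<k. \<Sum>l<m. cmod (x $ (b * m + l)) ^ 2)"
    by (rule sum_lessThan_mult_blocks)
  finally show ?thesis unfolding vec_norm2_def vec_block_def by (simp add: sum_nonneg)
qed

lemma markov_mat_Suc_mult_vec:
  assumes B: "B \<in> carrier_mat d m" and C: "C \<in> carrier_mat p d" and D: "D \<in> carrier_mat p m"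
    and x: "x \<in> carrier_vec ((n + 1) * m)"
  shows "markov_mat (n + 1) A B C D *\<^sub>v x = D *\<^sub>v vec_block m x 0
    + vec p (\<lambda>i. \<Sum>t<n. ((C * A ^\<^sub>m t * B) *\<^sub>v vec_block m x (Suc t)) $ i)"
proof (rule eq_vecI)
  fix i assume "i < dim_vec (D *\<^sub>v vec_block m x 0
    + vec p (\<lambda>i. \<Sum>t<n. ((C * A ^\<^sub>m t * B) *\<^sub>v vec_block m x (Suc t)) $ i))"
  then have i: "i < p" using D by simp
  have entry: "markov_mat (n + 1) A B C D $$ (i, b * m + l)
      = (if b = 0 then D $$ (i, l) else (C * A ^\<^sub>m (b - 1) * B) $$ (i, l))"
    if "b < n + 1" "l < m" for b l
  proof -
    have "b * m + l < (b + 1) * m" using that by simp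
    also have "\<dots> \<le> (n + 1) * m" using that by (intro mult_right_mono) auto
    finally have "b * m + l < (n + 1) * m" .
    moreover have "(b * m + l) div m = b" "(b * m + l) mod m = l" using that by auto
    ultimately show ?thesis using i D by (simp add: index_markov_mat)
  qed
  have "(markov_mat (n + 1) A B C D *\<^sub>v x) $ i
      = (\<Sum>c<(n + 1) * m. markov_mat (n + 1) A B C D $$ (i, c) * x $ c)"
    by (subst index_mult_mat_vec_sum) (use i D x in auto)
  also have "\<dots> = (\<Sum>b<n + 1. \<Sum>l<m. markov_mat (n + 1) A B C D $$ (i, b * m + l) * x $ (b * m + l))"
    by (rule sum_lessThan_mult_blocks)
  also have "\<dots> = (\<Sum>b<n + 1. \<Sum>l<m. (if b = 0 then D $$ (i, l) else (C * A ^\<^sub>m (b - 1) * B) $$ (i, l))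
      * vec_block m x b $ l)"
  proof (intro sum.cong refl)
    fix b l assume "b \<in> {..<n + 1}" "l \<in> {..<m}"
    then show "markov_mat (n + 1) A B C D $$ (i, b * m + l) * x $ (b * m + l)
      = (if b = 0 then D $$ (i, l) else (C * A ^\<^sub>m (b - 1) * B) $$ (i, l)) * vec_block m x b $ l"
      using entry[of b l] by (simp add: vec_block_def)
  qed
  also have "\<dots> = (\<Sum>l<m. D $$ (i, l) * vec_block m x 0 $ l)
      + (\<Sum>t<n. \<Sum>l<m. (C * A ^\<^sub>m t * B) $$ (i, l) * vec_block m x (Suc t) $ l)"
    unfolding Suc_eq_plus1[symmetric] sum.lessThan_Suc_shift by simp
  also have "(\<Sum>l<m. D $$ (i, l) * vec_block m x 0 $ l) = (D *\<^sub>v vec_block m x 0) $ i"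
    by (subst index_mult_mat_vec_sum) (use i D in \<open>auto simp: vec_block_def\<close>)
  also have "(\<Sum>t<n. \<Sum>l<m. (C * A ^\<^sub>m t * B) $$ (i, l) * vec_block m x (Suc t) $ l)
      = (\<Sum>t<n. ((C * A ^\<^sub>m t * B) *\<^sub>v vec_block m x (Suc t)) $ i)"
    by (rule sum.cong[OF refl]) (subst index_mult_mat_vec_sum, use i B C in \<open>auto simp: vec_block_def\<close>)
  finally show "(markov_mat (n + 1) A B C D *\<^sub>v x) $ i = (D *\<^sub>v vec_block m x 0
    + vec p (\<lambda>i. \<Sum>t<n. ((C * A ^\<^sub>m t * B) *\<^sub>v vec_block m x (Suc t)) $ i)) $ i"
    using i D by simp
qed (use D in simp)

lemma mult_mat_vec_similar_pow:
  assumes sim: "similar_mat_wit A J S Sinv" and A: "A \<in> carrier_mat d d"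
    and B: "B \<in> carrier_mat d m" and C: "C \<in> carrier_mat p d" and v: "v \<in> carrier_vec m"
  shows "(C * A ^\<^sub>m t * B) *\<^sub>v v = (C * S) *\<^sub>v (J ^\<^sub>m t *\<^sub>v ((Sinv * B) *\<^sub>v v))"
proof -
  have J: "J ^\<^sub>m t \<in> carrier_mat d d" and S: "S \<in> carrier_mat d d" and Si: "Sinv \<in> carrier_mat d d"
    using sim A unfolding similar_mat_wit_def Let_def by auto
  have SJ: "S * J ^\<^sub>m t \<in> carrier_mat d d" and SB: "Sinv * B \<in> carrier_mat d m"
    using S J Si B by auto
  have "C * A ^\<^sub>m t * B = C * ((S * J ^\<^sub>m t * Sinv) * B)"
    using similar_mat_wit_pow_id[OF sim] assoc_mult_mat[OF C mult_carrier_mat[OF SJ Si] B] by simp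
  also have "(S * J ^\<^sub>m t * Sinv) * B = S * (J ^\<^sub>m t * (Sinv * B))"
    using assoc_mult_mat[OF SJ Si B] assoc_mult_mat[OF S J SB] by simp
  also have "C * \<dots> = (C * S) * (J ^\<^sub>m t * (Sinv * B))"
    by (rule assoc_mult_mat[symmetric, OF C S mult_carrier_mat[OF J SB]])
  finally show ?thesis
    using assoc_mult_mat_vec[OF mult_carrier_mat[OF C S] mult_carrier_mat[OF J SB] v]
      assoc_mult_mat_vec[OF J SB v] by simp
qed

lemma vec_sum_mult_mat_vec:
  assumes M: "M \<in> carrier_mat p d" and w: "\<And>t. w t \<in> carrier_vec d"
  shows "vec p (\<lambda>i. \<Sum>t<n. (M *\<^sub>v w t) $ i) = M *\<^sub>v vec d (\<lambda>j. \<Sum>t<n. w t $ j)"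
proof (rule eq_vecI)
  fix i assume "i < dim_vec (M *\<^sub>v vec d (\<lambda>j. \<Sum>t<n. w t $ j))"
  then have i: "i < p" using M by simp
  have "(\<Sum>t<n. (M *\<^sub>v w t) $ i) = (\<Sum>t<n. \<Sum>j<d. M $$ (i, j) * w t $ j)"
    using M w i by (intro sum.cong refl, subst index_mult_mat_vec_sum) auto
  also have "\<dots> = (\<Sum>j<d. M $$ (i, j) * (\<Sum>t<n. w t $ j))"
    by (simp add: sum_distrib_left sum.swap[of _ "{..<n}"])
  also have "\<dots> = (M *\<^sub>v vec d (\<lambda>j. \<Sum>t<n. w t $ j)) $ i"
    by (subst index_mult_mat_vec_sum) (use M i in auto)
  finally show "vec p (\<lambda>i. \<Sum>t<n. (M *\<^sub>v w t) $ i) $ i = (M *\<^sub>v vec d (\<lambda>j. \<Sum>t<n. w t $ j)) $ i"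
    using i by simp
qed (use M in simp)

lemma markov_mat_Suc_mult_vec_similar:
  assumes sim: "similar_mat_wit A J S Sinv" and A: "A \<in> carrier_mat d d"
    and B: "B \<in> carrier_mat d m" and C: "C \<in> carrier_mat p d" and D: "D \<in> carrier_mat p m"
    and x: "x \<in> carrier_vec ((n + 1) * m)"
  shows "markov_mat (n + 1) A B C D *\<^sub>v x = D *\<^sub>v vec_block m x 0
    + (C * S) *\<^sub>v vec d (\<lambda>j. \<Sum>t<n. (J ^\<^sub>m t *\<^sub>v ((Sinv * B) *\<^sub>v vec_block m x (Suc t))) $ j)"
proof -
  have J: "J \<in> carrier_mat d d" and S: "S \<in> carrier_mat d d" and Si: "Sinv \<in> carrier_mat d d"
    using sim A unfolding similar_mat_wit_def Let_def by auto
  have xb: "vec_block m x b \<in> carrier_vec m" for b unfolding vec_block_def by simp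
  have Jy: "J ^\<^sub>m t *\<^sub>v ((Sinv * B) *\<^sub>v vec_block m x (Suc t)) \<in> carrier_vec d" for t
    using J Si B xb by (metis mult_carrier_mat mult_mat_vec_carrier pow_carrier_mat)
  have "markov_mat (n + 1) A B C D *\<^sub>v x
      = D *\<^sub>v vec_block m x 0 + vec p (\<lambda>i. \<Sum>t<n. ((C * A ^\<^sub>m t * B) *\<^sub>v vec_block m x (Suc t)) $ i)"
    by (rule markov_mat_Suc_mult_vec[OF B C D x])
  also have "vec p (\<lambda>i. \<Sum>t<n. ((C * A ^\<^sub>m t * B) *\<^sub>v vec_block m x (Suc t)) $ i)
      = vec p (\<lambda>i. \<Sum>t<n. ((C * S) *\<^sub>v (J ^\<^sub>m t *\<^sub>v ((Sinv * B) *\<^sub>v vec_block m x (Suc t)))) $ i)"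
    using mult_mat_vec_similar_pow[OF sim A B C xb] by simp
  also have "\<dots> = (C * S) *\<^sub>v vec d (\<lambda>j. \<Sum>t<n. (J ^\<^sub>m t *\<^sub>v ((Sinv * B) *\<^sub>v vec_block m x (Suc t))) $ j)"
    using C S Jy by (intro vec_sum_mult_mat_vec) auto
  finally show ?thesis .
qed

lemma vec_norm2_square_Suc_blocks:
  assumes "dim_vec x = (n + 1) * m"
  shows "vec_norm2 x ^ 2
    = vec_norm2 (vec_block m x 0) ^ 2 + L2_set (\<lambda>t. vec_norm2 (vec_block m x (Suc t))) {..<n} ^ 2"
proof -
  have "vec_norm2 x ^ 2 = (\<Sum>b<Suc n. vec_norm2 (vec_block m x b) ^ 2)"
    using vec_norm2_square_blocks[OF assms] by simp
  also have "\<dots> = vec_norm2 (vec_block m x 0) ^ 2 + (\<Sum>t<n. vec_norm2 (vec_block m x (Suc t)) ^ 2)"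
    by (rule sum.lessThan_Suc_shift)
  finally show ?thesis by (simp add: L2_set_def sum_nonneg)
qed

section \<open>The spectral bound\<close>

lemma poly_prod_linear_power_eq_0:
  fixes lam :: complex
  shows "(k, lam) \<in> set n_as \<Longrightarrow> k > 0 \<Longrightarrow> poly (\<Prod>(n, a)\<leftarrow>n_as. [:- a, 1:] ^ n) lam = 0"
  by (induction n_as) (auto simp: add.left_inverse zero_power)

lemma jordan_eigenvalue_norm_le_spectral_radius:
  assumes "d > 0" and A: "A \<in> carrier_mat d d"
    and sim: "similar_mat_wit A (jordan_matrix n_as) S Sinv"
    and "(k, lam) \<in> set n_as" "k > 0"
  shows "cmod lam \<le> spectral_radius A"
proof -
  have "similar_mat A (jordan_matrix n_as)" using sim unfolding similar_mat_def by blast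
  then have "char_poly A = (\<Prod>(n, a)\<leftarrow>n_as. [:- a, 1:] ^ n)"
    by (simp add: char_poly_similar jordan_matrix_char_poly)
  then have "lam \<in> spectrum A"
    using spectrum_root_char_poly[OF A] poly_prod_linear_power_eq_0[OF assms(4,5)] by simp
  then show ?thesis using spectral_radius_mem_max(2)[OF A assms(1)] by blast
qed

lemma Mfun_le_K2:
  assumes "(k, lam) \<in> set n_as" "k > 0"
  shows "Mfun k lam N \<le> K2 n_as N"
  unfolding K2_def
proof (rule Max_ge)
  have "blkspec n_as \<subseteq> (\<lambda>(k, lam). (lam, k)) ` set n_as" unfolding blkspec_def by force
  then have "finite (blkspec n_as)" by (rule finite_subset) simp
  then show "finite ((\<lambda>(lam, k). Mfun k lam N) ` blkspec n_as)" by simp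
  have "(lam, k) \<in> blkspec n_as" unfolding blkspec_def using assms by auto
  then show "Mfun k lam N \<in> (\<lambda>(lam, k). Mfun k lam N) ` blkspec n_as" by force
qed

lemma jordan_matrix_pow_sum_bounded_K2:
  assumes d: "d > 0" and A: "A \<in> carrier_mat d d"
    and sim: "similar_mat_wit A (jordan_matrix n_as) S Sinv"
    and sr: "spectral_radius A \<le> 1" and n: "n \<ge> 1"
  shows "0 \<le> K2 n_as n" and "pow_sum_bounded (jordan_matrix n_as) d (K2 n_as n) n"
proof -
  have block: "L2_set (jordan_weight k (cmod lam)) {..<n} \<le> K2 n_as n"
    if kl: "(k, lam) \<in> set n_as" and k: "k > 0" for k lam
  proof -
    have "cmod lam \<le> 1"
      using jordan_eigenvalue_norm_le_spectral_radius[OF d A sim kl k] sr by simp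
    then have "L2_set (jordan_weight k (cmod lam)) {..<n} \<le> Mfun k lam n"
      using k n by (intro L2_jordan_weight_le_Mfun) auto
    also have "\<dots> \<le> K2 n_as n" by (rule Mfun_le_K2[OF kl k])
    finally show ?thesis .
  qed
  have "jordan_matrix n_as \<in> carrier_mat d d"
    using sim A unfolding similar_mat_wit_def Let_def by auto
  then have dim: "sum_list (map fst n_as) = d" by (metis carrier_matD(1) jordan_matrix_dim(1))
  then have "\<exists>k\<in>set (map fst n_as). k \<noteq> 0" using d sum_list_eq_0_iff[of "map fst n_as"] by auto
  then obtain k lam where "(k, lam) \<in> set n_as" "k > 0" by auto
  then show K: "0 \<le> K2 n_as n" using block L2_set_nonneg order_trans by blast
  have "\<forall>(k, lam)\<in>set n_as. pow_sum_bounded (jordan_block k lam) k (K2 n_as n) n"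
  proof (clarify)
    fix k lam assume kl: "(k, lam) \<in> set n_as"
    show "pow_sum_bounded (jordan_block k lam) k (K2 n_as n) n"
    proof (cases "k = 0")
      case False
      then show ?thesis
        using pow_sum_bounded_mono[OF jordan_block_pow_sum_bounded block[OF kl]] by simp
    qed (simp add: pow_sum_bounded_def L2_set_0')
  qed
  from jordan_matrix_pow_sum_bounded[OF K this]
  show "pow_sum_bounded (jordan_matrix n_as) d (K2 n_as n) n" unfolding dim .
qed

lemma op_norm_markov_mat_Suc_le:
  assumes d: "d > 0"
    and A: "A \<in> carrier_mat d d" and B: "B \<in> carrier_mat d m"
    and C: "C \<in> carrier_mat p d" and D: "D \<in> carrier_mat p m"
    and sim: "similar_mat_wit A (jordan_matrix n_as) S Sinv"
    and sr: "spectral_radius A \<le> 1"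
    and n: "n \<ge> 1"
  shows "op_norm (markov_mat (n + 1) A B C D) \<le> op_norm D + op_norm (Sinv * B) * op_norm (C * S) * K2 n_as n"
proof (rule op_norm_least)
  fix x :: "complex vec"
  assume "x \<in> carrier_vec (dim_col (markov_mat (n + 1) A B C D))" and x1: "vec_norm2 x \<le> 1"
  then have x: "x \<in> carrier_vec ((n + 1) * m)" using D by simp
  define J where "J = jordan_matrix n_as"
  define xb where "xb = vec_block m x"
  define y where "y t = (Sinv * B) *\<^sub>v xb (Suc t)" for t
  define w where "w = vec d (\<lambda>j. \<Sum>t<n. (J ^\<^sub>m t *\<^sub>v y t) $ j)"
  have K: "0 \<le> K2 n_as n" and bounded: "pow_sum_bounded J d (K2 n_as n) n"
    using jordan_matrix_pow_sum_bounded_K2[OF d A sim sr n] unfolding J_def by auto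
  have J: "J \<in> carrier_mat d d" and S: "S \<in> carrier_mat d d" and Si: "Sinv \<in> carrier_mat d d"
    using sim A unfolding similar_mat_wit_def Let_def J_def by auto
  have xb: "xb b \<in> carrier_vec m" for b unfolding xb_def vec_block_def by simp
  have y: "y t \<in> carrier_vec d" for t
    unfolding y_def by (rule mult_mat_vec_carrier[OF mult_carrier_mat[OF Si B] xb])
  have "vec_norm2 (xb 0) ^ 2 + L2_set (\<lambda>t. vec_norm2 (xb (Suc t))) {..<n} ^ 2 \<le> 1"
    using vec_norm2_square_Suc_blocks[of x n m] x power_le_one[OF vec_norm2_nonneg x1, of 2]
    unfolding xb_def by simp
  then have "vec_norm2 (xb 0) ^ 2 \<le> 1" "L2_set (\<lambda>t. vec_norm2 (xb (Suc t))) {..<n} ^ 2 \<le> 1"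
    using zero_le_power2[of "vec_norm2 (xb 0)"]
      zero_le_power2[of "L2_set (\<lambda>t. vec_norm2 (xb (Suc t))) {..<n}"] by linarith+
  then have xb0: "vec_norm2 (xb 0) \<le> 1" and xbs: "L2_set (\<lambda>t. vec_norm2 (xb (Suc t))) {..<n} \<le> 1"
    using power2_le_imp_le[of _ 1] by simp_all
  have "vec_norm2 (y t) \<le> op_norm (Sinv * B) * vec_norm2 (xb (Suc t))" for t
    unfolding y_def by (rule vec_norm2_mult_mat_vec_le) (use B xb in simp)
  then have "L2_set (\<lambda>t. vec_norm2 (y t)) {..<n}
      \<le> L2_set (\<lambda>t. op_norm (Sinv * B) * vec_norm2 (xb (Suc t))) {..<n}"
    by (intro L2_set_mono) (auto simp: vec_norm2_nonneg)
  also have "\<dots> = op_norm (Sinv * B) * L2_set (\<lambda>t. vec_norm2 (xb (Suc t))) {..<n}"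
    by (rule L2_set_right_distrib[OF op_norm_nonneg, symmetric])
  also have "\<dots> \<le> op_norm (Sinv * B)"
    using xbs by (simp add: mult_left_le op_norm_nonneg)
  finally have w: "vec_norm2 w \<le> K2 n_as n * op_norm (Sinv * B)"
    unfolding w_def by (rule order_trans[OF vec_norm2_pow_sum_le[OF bounded J y] mult_left_mono[OF _ K]])
  have "markov_mat (n + 1) A B C D *\<^sub>v x = D *\<^sub>v xb 0 + (C * S) *\<^sub>v w"
    unfolding xb_def w_def y_def J_def by (rule markov_mat_Suc_mult_vec_similar[OF sim A B C D x])
  then have "vec_norm2 (markov_mat (n + 1) A B C D *\<^sub>v x) \<le> vec_norm2 (D *\<^sub>v xb 0) + vec_norm2 ((C * S) *\<^sub>v w)"
    using C D by (simp add: vec_norm2_add_le)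
  also have "vec_norm2 (D *\<^sub>v xb 0) \<le> op_norm D"
    using vec_norm2_mult_mat_vec_le_op_norm[of "xb 0" D] xb xb0 D by simp
  also have "vec_norm2 ((C * S) *\<^sub>v w) \<le> op_norm (C * S) * vec_norm2 w"
    by (rule vec_norm2_mult_mat_vec_le) (use S in \<open>simp add: w_def\<close>)
  also have "\<dots> \<le> op_norm (C * S) * (K2 n_as n * op_norm (Sinv * B))"
    by (rule mult_left_mono[OF w op_norm_nonneg])
  finally show "vec_norm2 (markov_mat (n + 1) A B C D *\<^sub>v x)
      \<le> op_norm D + op_norm (Sinv * B) * op_norm (C * S) * K2 n_as n"
    by (simp add: algebra_simps)
qed

theorem proposition16:
  fixes A B C D S Sinv :: "complex mat" and n_as :: "(nat \<times> complex) list"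
    and d m p n :: nat
  assumes "d > 0"
    and "A \<in> carrier_mat d d" and "B \<in> carrier_mat d m"
    and "C \<in> carrier_mat p d" and "D \<in> carrier_mat p m"
    and "similar_mat_wit A (jordan_matrix n_as) S Sinv"
    and "spectral_radius A \<le> 1"
    and "n \<ge> 1"
  shows "op_norm (markov_mat n A B C D) \<le> op_norm (markov_mat (n + 1) A B C D)
       \<and> op_norm (markov_mat (n + 1) A B C D)
           \<le> op_norm D + op_norm (Sinv * B) * op_norm (C * S) * K2 n_as n"
  using op_norm_markov_mat_mono op_norm_markov_mat_Suc_le[OF assms] by simp

end
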